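(* Let $G$ be the complete graph on vertices $o,u,v,d$ and $H$ have the single OD-pair $(o,d)$. Take two classes with $\lambda(I^1)=3$, $\lambda(I^2)=4$ and the following costs, where $M\ge 100$ is a constant: class 1: $c_{(o,u)}(x)=x$, $c_{(u,v)}(x)=x+18$, $c_{(v,d)}(x)=x$, $c_{(o,d)}(x)=7x$, and $c_{(o,v)}=c_{(v,u)}=c_{(u,d)}=x+M$; class 2: $c_{(o,u)}(x)=5x$, $c_{(o,v)}(x)=x$, $c_{(u,d)}(x)=x$, $c_{(v,d)}(x)=5x$, $c_{(o,d)}(x)=x+10$, and $c_{(u,v)}=c_{(v,u)}=x+M$. Let $\sigma$ have all class 1 users on $ouvd$ and all class 2 users on $od$; let $\hat\sigma$ have all class 1 users on $od$, half of the class 2 users (measure $2$) on $oud$ and the other half on $ovd$. Then $\sigma$ and $\hat\sigma$ are both equilibria and induce different flows (e.g. flow $4$ versus $3$ on arc $(o,d)$). In particular a two-terminal network can have multiple equilibrium flows with only two classes of users.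
   Context: Model: the directed version of $G$ replaces each edge by two opposite arcs; routes are the directed $(o,d)$-paths ($od$, $oud$, $ovd$, $ouvd$, $ovud$); costs on arcs not listed (which lie on no $(o,d)$-path) are irrelevant. Users form a bounded interval with Lebesgue measure $\lambda$; the flow on an arc is the measure of users whose route contains it; a user's route cost is the sum over its arcs of his class's cost function evaluated at the arc flow; an equilibrium is a strategy profile in which every user's route has minimal cost among all $(o,d)$-routes. *)

theory Defs
  imports "HOL-Analysis.Analysis"
begin

datatype vertex = Vo | Vu | Vv | Vd

type_synonym arc = "vertex \<times> vertex"
type_synonym route = "vertex list"

definition od_routes :: "route set" where
  "od_routes = {[Vo,Vd], [Vo,Vu,Vd], [Vo,Vv,Vd], [Vo,Vu,Vv,Vd], [Vo,Vv,Vu,Vd]}"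

definition route_arcs :: "route \<Rightarrow> arc list" where
  "route_arcs r = zip r (tl r)"

definition arc_flow :: "real set \<Rightarrow> (real \<Rightarrow> route) \<Rightarrow> arc \<Rightarrow> real" where
  "arc_flow I \<sigma> a = measure lebesgue {i \<in> I. a \<in> set (route_arcs (\<sigma> i))}"

definition route_cost ::
  "real set \<Rightarrow> (nat \<Rightarrow> arc \<Rightarrow> real \<Rightarrow> real) \<Rightarrow> (real \<Rightarrow> route) \<Rightarrow> nat \<Rightarrow> route \<Rightarrow> real" where
  "route_cost I c \<sigma> k r = sum_list (map (\<lambda>a. c k a (arc_flow I \<sigma> a)) (route_arcs r))"

definition equilibrium ::
  "real set \<Rightarrow> (real \<Rightarrow> nat) \<Rightarrow> (nat \<Rightarrow> arc \<Rightarrow> real \<Rightarrow> real) \<Rightarrow> (real \<Rightarrow> route) \<Rightarrow> bool" where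
  "equilibrium I cls c \<sigma> \<longleftrightarrow>
     (\<forall>i\<in>I. \<sigma> i \<in> od_routes \<and>
        (\<forall>r\<in>od_routes. route_cost I c \<sigma> (cls i) (\<sigma> i) \<le> route_cost I c \<sigma> (cls i) r))"

definition users :: "real set" where "users = {0..<7}"
definition class1 :: "real set" where "class1 = {0..<3}"
definition class2 :: "real set" where "class2 = {3..<7}"
definition cls :: "real \<Rightarrow> nat" where "cls i = (if i \<in> class1 then 1 else 2)"

text \<open>Cost functions of the example, parameterized by M. Arcs not listed lie on no
(o,d)-path; their cost is set to 0 (irrelevant).\<close>
definition cost :: "real \<Rightarrow> nat \<Rightarrow> arc \<Rightarrow> real \<Rightarrow> real" where
  "cost M k a x =
     (if k = 1 then
        (if a = (Vo,Vu) then x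
         else if a = (Vu,Vv) then x + 18
         else if a = (Vv,Vd) then x
         else if a = (Vo,Vd) then 7 * x
         else if a = (Vo,Vv) \<or> a = (Vv,Vu) \<or> a = (Vu,Vd) then x + M
         else 0)
      else
        (if a = (Vo,Vu) then 5 * x
         else if a = (Vo,Vv) then x
         else if a = (Vu,Vd) then x
         else if a = (Vv,Vd) then 5 * x
         else if a = (Vo,Vd) then x + 10
         else if a = (Vu,Vv) \<or> a = (Vv,Vu) then x + M
         else 0))"

definition sigma :: "real \<Rightarrow> route" where
  "sigma i = (if i \<in> class1 then [Vo,Vu,Vv,Vd] else [Vo,Vd])"

end

theory Submission
  imports Defs
begin

(* First the flows of both profiles
   are determined: the users of each arc form one of the sets class1, class2, or one
   of the two halves A, class2 - A of class 2 (each of measure 2), so every arc flow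
   is 0, 2, 3 or 4.  With the flows fixed, every route cost is an explicit affine
   expression in M, and the equilibrium conditions reduce to finitely many linear
   inequalities, which hold because M >= 100:
     under sigma:     class 1 pays 27 on ouvd vs. 28 on od,  class 2 pays 14 on od vs. 15;
     under sigma_hat: class 1 pays 21 on od vs. 22 on ouvd,  class 2 pays 12 on oud and
                      on ovd vs. 13 on od;
   all remaining routes use an arc of cost at least M. *)

lemma measure_class1: "measure lebesgue class1 = 3"
  by (simp add: class1_def)

lemma measure_class2: "measure lebesgue class2 = 4"
  by (simp add: class2_def)

lemma users_partition: "users = class1 \<union> class2" "class1 \<inter> class2 = {}"
  by (auto simp: users_def class1_def class2_def)

(* A subset of class 2 of measure 2 leaves a complement of measure 2 in class 2
   (it is measurable because non-measurable sets have measure 0). *)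
lemma class2_complement_measure:
  assumes "measure lebesgue A = 2" and "A \<subseteq> class2"
  shows "measure lebesgue (class2 - A) = 2"
proof -
  have "A \<in> sets lebesgue"
    using assms(1) measure_notin_sets[of A lebesgue] by fastforce
  moreover have "emeasure lebesgue class2 \<noteq> \<infinity>" "class2 \<in> sets lebesgue"
    by (simp_all add: class2_def)
  ultimately show ?thesis
    using measure_Diff[of lebesgue class2 A] assms measure_class2 by simp
qed

lemma flow_sigma:
  "arc_flow users sigma a =
     (if a = (Vo,Vd) then 4 else if a \<in> {(Vo,Vu),(Vu,Vv),(Vv,Vd)} then 3 else 0)"
proof -
  have "{i \<in> users. a \<in> set (route_arcs (sigma i))} =
      (if a = (Vo,Vd) then class2
       else if a \<in> {(Vo,Vu),(Vu,Vv),(Vv,Vd)} then class1 else {})"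
    using users_partition by (auto simp: sigma_def route_arcs_def)
  then show ?thesis by (simp add: arc_flow_def measure_class1 measure_class2)
qed

lemma flow_sigma_hat:
  assumes class1_od: "\<forall>i\<in>class1. sigma_hat i = [Vo,Vd]"
    and class2_routes: "\<forall>i\<in>class2. sigma_hat i \<in> {[Vo,Vu,Vd], [Vo,Vv,Vd]}"
    and half_oud: "measure lebesgue {i \<in> class2. sigma_hat i = [Vo,Vu,Vd]} = 2"
  shows "arc_flow users sigma_hat a =
     (if a = (Vo,Vd) then 3 else if a \<in> {(Vo,Vu),(Vu,Vd),(Vo,Vv),(Vv,Vd)} then 2 else 0)"
proof -
  define A where "A = {i \<in> class2. sigma_hat i = [Vo,Vu,Vd]}"
  define users_of where "users_of a =
      (if a = (Vo,Vd) then class1 else if a \<in> {(Vo,Vu),(Vu,Vd)} then A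
       else if a \<in> {(Vo,Vv),(Vv,Vd)} then class2 - A else {})" for a
  have half_oud_A: "measure lebesgue A = 2" and half_ovd: "measure lebesgue (class2 - A) = 2"
    using class2_complement_measure half_oud by (auto simp: A_def)
  have "x \<in> users \<and> a \<in> set (route_arcs (sigma_hat x)) \<longleftrightarrow> x \<in> users_of a" for x
  proof -
    consider "x \<in> class1" | "x \<in> A" | "x \<in> class2 - A" "sigma_hat x = [Vo,Vv,Vd]"
      | "x \<notin> users"
      using users_partition class2_routes by (auto simp: A_def)
    then show ?thesis
    proof cases
      case 1
      then show ?thesis using class1_od users_partition
        by (auto simp: users_of_def A_def route_arcs_def)
    next
      case 2
      then have "sigma_hat x = [Vo,Vu,Vd]" "x \<in> users" "x \<notin> class1"
        using users_partition by (auto simp: A_def)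
      then show ?thesis using 2 by (auto simp: users_of_def route_arcs_def)
    next
      case 3
      then have "x \<in> users" "x \<notin> class1" using users_partition by auto
      then show ?thesis using 3 by (auto simp: users_of_def route_arcs_def)
    next
      case 4
      then show ?thesis using users_partition by (auto simp: users_of_def A_def)
    qed
  qed
  then have "{i \<in> users. a \<in> set (route_arcs (sigma_hat i))} = users_of a"
    by blast
  then show ?thesis
    by (simp add: arc_flow_def users_of_def measure_class1 half_oud_A half_ovd)
qed

lemma sigma_equilibrium:
  assumes "M \<ge> 100"
  shows "equilibrium users cls (cost M) sigma"
  unfolding equilibrium_def
proof
  fix i assume "i \<in> users"
  show "sigma i \<in> od_routes \<and> (\<forall>r\<in>od_routes.
          route_cost users (cost M) sigma (cls i) (sigma i)
            \<le> route_cost users (cost M) sigma (cls i) r)"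
    using assms
    by (cases "i \<in> class1")
       (simp_all add: sigma_def cls_def od_routes_def route_cost_def route_arcs_def
          flow_sigma cost_def)
qed

lemma sigma_hat_equilibrium:
  assumes "M \<ge> 100"
    and class1_od: "\<forall>i\<in>class1. sigma_hat i = [Vo,Vd]"
    and class2_routes: "\<forall>i\<in>class2. sigma_hat i \<in> {[Vo,Vu,Vd], [Vo,Vv,Vd]}"
    and half_oud: "measure lebesgue {i \<in> class2. sigma_hat i = [Vo,Vu,Vd]} = 2"
  shows "equilibrium users cls (cost M) sigma_hat"
  unfolding equilibrium_def
proof
  note flow = flow_sigma_hat[OF class1_od class2_routes half_oud]
  fix i assume "i \<in> users"
  then consider "i \<in> class1" | "i \<notin> class1" "i \<in> class2"
    using users_partition by auto
  then show "sigma_hat i \<in> od_routes \<and> (\<forall>r\<in>od_routes.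
          route_cost users (cost M) sigma_hat (cls i) (sigma_hat i)
            \<le> route_cost users (cost M) sigma_hat (cls i) r)"
  proof cases
    case 1
    then show ?thesis using assms(1) class1_od
      by (simp add: cls_def od_routes_def route_cost_def route_arcs_def flow cost_def)
  next
    case 2
    then have "sigma_hat i \<in> {[Vo,Vu,Vd], [Vo,Vv,Vd]}" using class2_routes by auto
    then show ?thesis using assms(1) 2
      by (auto simp: cls_def od_routes_def route_cost_def route_arcs_def flow cost_def)
  qed
qed

theorem mainTheorem17:
  fixes M :: real and sigma_hat :: "real \<Rightarrow> route"
  assumes "M \<ge> 100"
    and "\<forall>i\<in>class1. sigma_hat i = [Vo,Vd]"
    and "\<forall>i\<in>class2. sigma_hat i \<in> {[Vo,Vu,Vd], [Vo,Vv,Vd]}"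
    and "measure lebesgue {i \<in> class2. sigma_hat i = [Vo,Vu,Vd]} = 2"
  shows "equilibrium users cls (cost M) sigma
       \<and> equilibrium users cls (cost M) sigma_hat
       \<and> arc_flow users sigma (Vo,Vd) = 4
       \<and> arc_flow users sigma_hat (Vo,Vd) = 3
       \<and> arc_flow users sigma \<noteq> arc_flow users sigma_hat"
proof -
  have "arc_flow users sigma (Vo,Vd) = 4" by (simp add: flow_sigma)
  moreover have "arc_flow users sigma_hat (Vo,Vd) = 3"
    using flow_sigma_hat[OF assms(2-4)] by simp
  ultimately show ?thesis
    using sigma_equilibrium[OF assms(1)] sigma_hat_equilibrium[OF assms] by auto
qed

end
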